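(* Let $G=(R,B,2,(\succsim_a)_{a\in R\cup B})$ be a roommate diversity game with room size $2$. Let $G_m$ be the complete undirected graph on vertex set $R\cup B$ in which the edge $\{a,b\}$ has weight $w(a,b)\in\{0,1,2\}$ equal to the number of agents among $a,b$ that are happy in the room $\{a,b\}$. Then every maximum weight perfect matching $M_*$ of $G_m$, viewed as an outcome of $G$ (each matched pair forms a room), is popular.
   Context: A roommate diversity game is a quadruple $G=(R,B,s,(\succsim_a)_{a\in R\cup B})$ where $R$ (red agents) and $B$ (blue agents) are disjoint finite sets, $s\in\mathbb{N}^+$ is the room size, $|R\cup B|=ks$ for some $k\in\mathbb{N}$, and each $\succsim_a$ is a complete transitive weak order on $D=\{j/s : j\in\{0,\dots,s\}\}$. An outcome is a partition $\pi$ of $N=R\cup B$ into $k$ rooms of size $s$; $\pi(a)$ is the room containing $a$, and $\theta(C)=|C\cap R|/|C|$ is the fraction of red agents of a room $C$. Agent $a$ prefers $\pi$ to $\pi'$ if $\theta(\pi(a))\succsim_a\theta(\pi'(a))$ and not $\theta(\pi'(a))\succsim_a\theta(\pi(a))$. Let $N(\pi,\pi')$ be the set of agents preferring $\pi$ to $\pi'$ and $\phi(\pi,\pi')=|N(\pi,\pi')|-|N(\pi',\pi)|$. An outcome $\pi$ is popular if $\phi(\pi,\pi')\ge 0$ for every outcome $\pi'$. For room size $2$, a red agent can only be in rooms of fraction $1/2$ or $1$, and a blue agent only in rooms of fraction $0$ or $1/2$; preferences over the impossible fraction are disregarded. An agent is happy in a room if the fraction of that room is weakly preferred by the agent to every fraction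 possible for its color (i.e. $\{1/2,1\}$ for red, $\{0,1/2\}$ for blue); otherwise it is sad. *)

theory Defs
  imports Main "HOL-Library.Disjoint_Sets" Complex_Main
begin

text \<open>Fractions of red agents possible in a room of size s.\<close>
definition fracs :: "nat \<Rightarrow> real set" where
  "fracs s = {real j / real s | j. j \<le> s}"

definition rdg :: "'a set \<Rightarrow> 'a set \<Rightarrow> nat \<Rightarrow> ('a \<Rightarrow> real \<Rightarrow> real \<Rightarrow> bool) \<Rightarrow> bool" where
  "rdg R B s pref \<longleftrightarrow> finite R \<and> finite B \<and> R \<inter> B = {} \<and> s > 0 \<and>
     s dvd card (R \<union> B) \<and>
     (\<forall>a \<in> R \<union> B.
        (\<forall>x\<in>fracs s. \<forall>y\<in>fracs s. pref a x y \<or> pref a y x) \<and>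
        (\<forall>x\<in>fracs s. \<forall>y\<in>fracs s. \<forall>z\<in>fracs s. pref a x y \<longrightarrow> pref a y z \<longrightarrow> pref a x z))"

definition outcome :: "'a set \<Rightarrow> nat \<Rightarrow> 'a set set \<Rightarrow> bool" where
  "outcome N s \<pi> \<longleftrightarrow> partition_on N \<pi> \<and> (\<forall>C\<in>\<pi>. card C = s)"

definition room :: "'a set set \<Rightarrow> 'a \<Rightarrow> 'a set" where
  "room \<pi> a = (THE C. C \<in> \<pi> \<and> a \<in> C)"

definition theta :: "'a set \<Rightarrow> 'a set \<Rightarrow> real" where
  "theta R C = real (card (C \<inter> R)) / real (card C)"

definition prefers :: "'a set \<Rightarrow> ('a \<Rightarrow> real \<Rightarrow> real \<Rightarrow> bool) \<Rightarrow> 'a \<Rightarrow> 'a set set \<Rightarrow> 'a set set \<Rightarrow> bool" where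
  "prefers R pref a \<pi> \<pi>' \<longleftrightarrow>
     pref a (theta R (room \<pi> a)) (theta R (room \<pi>' a)) \<and>
     \<not> pref a (theta R (room \<pi>' a)) (theta R (room \<pi> a))"

definition phi :: "'a set \<Rightarrow> 'a set \<Rightarrow> ('a \<Rightarrow> real \<Rightarrow> real \<Rightarrow> bool) \<Rightarrow> 'a set set \<Rightarrow> 'a set set \<Rightarrow> int" where
  "phi R B pref \<pi> \<pi>' =
     int (card {a \<in> R \<union> B. prefers R pref a \<pi> \<pi>'}) - int (card {a \<in> R \<union> B. prefers R pref a \<pi>' \<pi>})"

definition popular :: "'a set \<Rightarrow> 'a set \<Rightarrow> nat \<Rightarrow> ('a \<Rightarrow> real \<Rightarrow> real \<Rightarrow> bool) \<Rightarrow> 'a set set \<Rightarrow> bool" where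
  "popular R B s pref \<pi> \<longleftrightarrow> outcome (R \<union> B) s \<pi> \<and>
     (\<forall>\<pi>'. outcome (R \<union> B) s \<pi>' \<longrightarrow> phi R B pref \<pi> \<pi>' \<ge> 0)"

definition possible2 :: "'a set \<Rightarrow> 'a \<Rightarrow> real set" where
  "possible2 R a = (if a \<in> R then {1/2, 1} else {0, 1/2})"

definition happy :: "'a set \<Rightarrow> ('a \<Rightarrow> real \<Rightarrow> real \<Rightarrow> bool) \<Rightarrow> 'a \<Rightarrow> 'a set \<Rightarrow> bool" where
  "happy R pref a C \<longleftrightarrow> (\<forall>x\<in>possible2 R a. pref a (theta R C) x)"

definition wt :: "'a set \<Rightarrow> ('a \<Rightarrow> real \<Rightarrow> real \<Rightarrow> bool) \<Rightarrow> 'a set \<Rightarrow> nat" where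
  "wt R pref e = card {x \<in> e. happy R pref x e}"

definition perfect_matching :: "'a set \<Rightarrow> 'a set set \<Rightarrow> bool" where
  "perfect_matching N M \<longleftrightarrow> M \<subseteq> {e. e \<subseteq> N \<and> card e = 2} \<and> (\<forall>v\<in>N. \<exists>!e. e \<in> M \<and> v \<in> e)"

definition max_weight_pm :: "'a set \<Rightarrow> ('a \<Rightarrow> real \<Rightarrow> real \<Rightarrow> bool) \<Rightarrow> 'a set \<Rightarrow> 'a set set \<Rightarrow> bool" where
  "max_weight_pm R pref N M \<longleftrightarrow> perfect_matching N M \<and>
     (\<forall>M'. perfect_matching N M' \<longrightarrow> (\<Sum>e\<in>M'. wt R pref e) \<le> (\<Sum>e\<in>M. wt R pref e))"

end

theory Submission
  imports Defs
begin

text \<open>With room size 2 an agent can only be in two kinds of room, so it prefers one outcome to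
  another exactly when it is happy in the first and sad in the second. Hence
  \<open>\<phi>(\<pi>, \<pi>')\<close> is the number of happy agents in \<open>\<pi>\<close> minus that in \<open>\<pi>'\<close>, i.e. the difference of the
  weights of \<open>\<pi>\<close> and \<open>\<pi>'\<close> in \<open>G\<^sub>m\<close>. Since the outcomes are exactly the perfect matchings of
  \<open>G\<^sub>m\<close>, a matching of maximum weight is popular.\<close>

lemma room_eqI:
  assumes "partition_on N \<pi>" "C \<in> \<pi>" "a \<in> C"
  shows "room \<pi> a = C"
  unfolding room_def
proof (rule the_equality)
  fix C' assume "C' \<in> \<pi> \<and> a \<in> C'"
  then show "C' = C"
    using assms disjointD[OF partition_onD2[OF assms(1)]] by blast
qed (use assms in simp)

lemma room_in_partition:
  assumes "partition_on N \<pi>" "a \<in> N"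
  shows "room \<pi> a \<in> \<pi>" "a \<in> room \<pi> a"
proof -
  obtain C where "C \<in> \<pi>" "a \<in> C"
    using assms partition_onD1 by blast
  then show "room \<pi> a \<in> \<pi>" "a \<in> room \<pi> a"
    using room_eqI[OF assms(1)] by simp_all
qed

lemma outcome_2_iff_perfect_matching: "outcome N 2 \<pi> \<longleftrightarrow> perfect_matching N \<pi>"
proof
  assume "outcome N 2 \<pi>"
  then have \<pi>: "partition_on N \<pi>" "\<forall>C\<in>\<pi>. card C = 2"
    unfolding outcome_def by auto
  have "\<exists>!C. C \<in> \<pi> \<and> a \<in> C" if "a \<in> N" for a
    using room_in_partition[OF \<pi>(1) that] room_eqI[OF \<pi>(1)] by metis
  then show "perfect_matching N \<pi>"
    using \<pi>(2) partition_onD1[OF \<pi>(1)] unfolding perfect_matching_def by auto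
next
  assume "perfect_matching N \<pi>"
  then have edges: "\<pi> \<subseteq> {C. C \<subseteq> N \<and> card C = 2}" and unique: "\<forall>a\<in>N. \<exists>!C. C \<in> \<pi> \<and> a \<in> C"
    unfolding perfect_matching_def by blast+
  have "partition_on N \<pi>"
  proof (rule partition_onI)
    show "\<Union>\<pi> = N"
      using edges unique by blast
    show "disjnt C C'" if "C \<in> \<pi>" "C' \<in> \<pi>" "C \<noteq> C'" for C C'
      using that edges unique unfolding disjnt_def by blast
    show "{} \<notin> \<pi>"
      using edges by fastforce
  qed
  then show "outcome N 2 \<pi>"
    using edges unfolding outcome_def by blast
qed

lemma theta_in_possible2:
  assumes "card C = 2" "a \<in> C"
  shows "theta R C \<in> possible2 R a"
proof -
  have "finite C"
    using assms(1) card.infinite by fastforce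
  show ?thesis
  proof (cases "a \<in> R")
    case True
    have "0 < card (C \<inter> R)"
      using True assms(2) \<open>finite C\<close> by (auto simp: card_gt_0_iff)
    moreover have "card (C \<inter> R) \<le> 2"
      using assms(1) \<open>finite C\<close> by (metis card_mono inf_le1)
    ultimately have "card (C \<inter> R) = 1 \<or> card (C \<inter> R) = 2"
      by linarith
    then show ?thesis
      using True assms(1) unfolding theta_def possible2_def by auto
  next
    case False
    then have "card (C \<inter> R) \<le> card (C - {a})"
      using \<open>finite C\<close> by (intro card_mono) auto
    moreover have "card (C - {a}) = 1"
      using assms \<open>finite C\<close> by simp
    ultimately have "card (C \<inter> R) = 0 \<or> card (C \<inter> R) = 1"
      by linarith
    then show ?thesis
      using False assms(1) unfolding theta_def possible2_def by auto
  qed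
qed

lemma possible2_subset_fracs: "possible2 R a \<subseteq> fracs 2"
proof -
  have "real j / real 2 \<in> fracs 2" if "j \<le> 2" for j
    using that unfolding fracs_def by blast
  from this[of 0] this[of 1] this[of 2] show ?thesis
    unfolding possible2_def by auto
qed

lemma rdg_pref_total_on_possible2:
  assumes "rdg R B 2 pref" "a \<in> R \<union> B" "x \<in> possible2 R a" "y \<in> possible2 R a"
  shows "pref a x y \<or> pref a y x"
proof -
  have total: "\<forall>x\<in>fracs 2. \<forall>y\<in>fracs 2. pref a x y \<or> pref a y x"
    using assms(1,2) unfolding rdg_def by (elim conjE) (drule bspec, assumption, elim conjE)
  have "x \<in> fracs 2" "y \<in> fracs 2"
    using assms(3,4) possible2_subset_fracs[of R a] by auto
  then show ?thesis
    using total by blast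
qed

lemma strict_iff_top_of_total_pair:
  assumes "t \<in> {x, y}" "t' \<in> {x, y}" and total: "\<forall>u\<in>{x, y}. \<forall>v\<in>{x, y}. r u v \<or> r v u"
  shows "r t t' \<and> \<not> r t' t \<longleftrightarrow> (\<forall>u\<in>{x, y}. r t u) \<and> \<not> (\<forall>u\<in>{x, y}. r t' u)"
  using assms by blast

lemma prefers_iff_happy:
  assumes "rdg R B 2 pref" "a \<in> R \<union> B"
    and "outcome (R \<union> B) 2 \<pi>" "outcome (R \<union> B) 2 \<pi>'"
  shows "prefers R pref a \<pi> \<pi>' \<longleftrightarrow> happy R pref a (room \<pi> a) \<and> \<not> happy R pref a (room \<pi>' a)"
proof -
  have theta_possible: "theta R (room \<sigma> a) \<in> possible2 R a" if "outcome (R \<union> B) 2 \<sigma>" for \<sigma>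
  proof -
    have part: "partition_on (R \<union> B) \<sigma>" and "\<forall>C\<in>\<sigma>. card C = 2"
      using that unfolding outcome_def by blast+
    then have "card (room \<sigma> a) = 2"
      using room_in_partition(1)[OF part assms(2)] by blast
    then show ?thesis
      by (rule theta_in_possible2[OF _ room_in_partition(2)[OF part assms(2)]])
  qed
  obtain x y where two: "possible2 R a = {x, y}"
    unfolding possible2_def by (cases "a \<in> R") auto
  have total: "\<forall>u\<in>{x, y}. \<forall>v\<in>{x, y}. pref a u v \<or> pref a v u"
    unfolding two[symmetric] using rdg_pref_total_on_possible2[OF assms(1,2)] by blast
  show ?thesis
    unfolding prefers_def happy_def two
    using strict_iff_top_of_total_pair[OF _ _ total] theta_possible[OF assms(3)]
      theta_possible[OF assms(4)] two by simp
qed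

lemma card_happy_eq_weight:
  assumes "finite N" "outcome N 2 \<pi>"
  shows "card {a \<in> N. happy R pref a (room \<pi> a)} = (\<Sum>C\<in>\<pi>. wt R pref C)"
proof -
  have \<pi>: "partition_on N \<pi>"
    using assms(2) unfolding outcome_def by blast
  have "finite C" if "C \<in> \<pi>" for C
  proof (rule finite_subset[OF _ assms(1)])
    show "C \<subseteq> N"
      using that partition_onD1[OF \<pi>] by blast
  qed
  have "card {a \<in> N. happy R pref a (room \<pi> a)} = (\<Sum>a\<in>N. of_bool (happy R pref a (room \<pi> a)))"
    using assms(1) by (simp add: Int_def)
  also have "\<dots> = (\<Sum>C\<in>\<pi>. \<Sum>a\<in>C. of_bool (happy R pref a (room \<pi> a)))"
    by (rule sum.partition[OF assms(1) \<pi>])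
  also have "\<dots> = (\<Sum>C\<in>\<pi>. \<Sum>a\<in>C. of_bool (happy R pref a C))"
    using room_eqI[OF \<pi>] by (intro sum.cong) auto
  also have "\<dots> = (\<Sum>C\<in>\<pi>. wt R pref C)"
    using \<open>\<And>C. C \<in> \<pi> \<Longrightarrow> finite C\<close>
    unfolding wt_def by (intro sum.cong) (simp_all add: Int_def)
  finally show ?thesis .
qed

lemma int_card_only_diff:
  assumes "finite A"
  shows "int (card {a \<in> A. P a \<and> \<not> Q a}) - int (card {a \<in> A. Q a \<and> \<not> P a})
       = int (card {a \<in> A. P a}) - int (card {a \<in> A. Q a})"
proof -
  have split: "card {a \<in> A. S a} = card {a \<in> A. S a \<and> \<not> T a} + card {a \<in> A. S a \<and> T a}"
    for S T :: "'a \<Rightarrow> bool"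
  proof -
    have "{a \<in> A. S a} = {a \<in> A. S a \<and> \<not> T a} \<union> {a \<in> A. S a \<and> T a}"
      by blast
    then show ?thesis
      using assms by (simp add: card_Un_disjoint disjoint_iff)
  qed
  have "card {a \<in> A. Q a \<and> P a} = card {a \<in> A. P a \<and> Q a}"
    by (metis conj_commute)
  then show ?thesis
    using split[of P Q] split[of Q P] by linarith
qed

lemma phi_eq_weight_diff:
  assumes "rdg R B 2 pref" "outcome (R \<union> B) 2 \<pi>" "outcome (R \<union> B) 2 \<pi>'"
  shows "phi R B pref \<pi> \<pi>' = int (\<Sum>C\<in>\<pi>. wt R pref C) - int (\<Sum>C\<in>\<pi>'. wt R pref C)"
proof -
  have fin: "finite (R \<union> B)"
    using assms(1) unfolding rdg_def by blast
  have prefers_set: "{a \<in> R \<union> B. prefers R pref a \<sigma> \<sigma>'} =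
      {a \<in> R \<union> B. happy R pref a (room \<sigma> a) \<and> \<not> happy R pref a (room \<sigma>' a)}"
    if "outcome (R \<union> B) 2 \<sigma>" "outcome (R \<union> B) 2 \<sigma>'" for \<sigma> \<sigma>'
    using prefers_iff_happy[OF assms(1) _ that] by blast
  show ?thesis
    unfolding phi_def prefers_set[OF assms(2,3)] prefers_set[OF assms(3,2)]
      int_card_only_diff[OF fin] card_happy_eq_weight[OF fin assms(2)]
      card_happy_eq_weight[OF fin assms(3)] ..
qed

theorem mainTheorem1:
  fixes R B :: "'a set" and pref :: "'a \<Rightarrow> real \<Rightarrow> real \<Rightarrow> bool" and M :: "'a set set"
  assumes "rdg R B 2 pref"
    and "max_weight_pm R pref (R \<union> B) M"
  shows "popular R B 2 pref M"
  unfolding popular_def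
proof (intro conjI allI impI)
  show M: "outcome (R \<union> B) 2 M"
    using assms(2) outcome_2_iff_perfect_matching unfolding max_weight_pm_def by blast
  fix \<pi> assume \<pi>: "outcome (R \<union> B) 2 \<pi>"
  then have "(\<Sum>C\<in>\<pi>. wt R pref C) \<le> (\<Sum>C\<in>M. wt R pref C)"
    using assms(2) outcome_2_iff_perfect_matching unfolding max_weight_pm_def by blast
  then show "phi R B pref M \<pi> \<ge> 0"
    unfolding phi_eq_weight_diff[OF assms(1) M \<pi>] by linarith
qed

end
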